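(* Let $G$ be a finite group, $p$ a prime, and $S$ a Sylow $p$-subgroup of $G$. Then $W_G(S)$ is a subgroup of $Z(S)$.
   Context: An element $x \in S$ is weakly closed in $S$ with respect to $G$ if $x^g = x$ whenever $g \in G$ and $x^g := g^{-1}xg \in S$. $W_G(S)$ denotes the set of all elements of $S$ that are weakly closed in $S$ with respect to $G$. *)

theory Defs
  imports "HOL-Algebra.Algebra" "HOL-Computational_Algebra.Primes"
begin

definition sylow_subgroup :: "('a, 'b) monoid_scheme \<Rightarrow> nat \<Rightarrow> 'a set \<Rightarrow> bool" where
  "sylow_subgroup G p S \<longleftrightarrow> subgroup S G \<and> card S = p ^ multiplicity p (order G)"

definition center_of :: "('a, 'b) monoid_scheme \<Rightarrow> 'a set \<Rightarrow> 'a set" where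
  "center_of G S = {z \<in> S. \<forall>y\<in>S. z \<otimes>\<^bsub>G\<^esub> y = y \<otimes>\<^bsub>G\<^esub> z}"

definition conj_by :: "('a, 'b) monoid_scheme \<Rightarrow> 'a \<Rightarrow> 'a \<Rightarrow> 'a" where
  "conj_by G x g = inv\<^bsub>G\<^esub> g \<otimes>\<^bsub>G\<^esub> x \<otimes>\<^bsub>G\<^esub> g"

definition weakly_closed_elems :: "('a, 'b) monoid_scheme \<Rightarrow> 'a set \<Rightarrow> 'a set" where
  "weakly_closed_elems G S =
     {x \<in> S. \<forall>g\<in>carrier G. conj_by G x g \<in> S \<longrightarrow> conj_by G x g = x}"

end

theory Submission
  imports Defs
begin

text \<open>For \<open>x, y \<in> W\<^sub>G(S)\<close> and \<open>g \<in> G\<close> with \<open>w = (xy)\<^sup>g \<in> S\<close> we must show \<open>w = xy\<close>.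
Weakly closed elements are central in \<open>S\<close>, hence so is \<open>xy\<close>, and therefore the Sylow
subgroup \<open>S\<^sup>g\<close> lies in the centralizer \<open>C = C\<^sub>G(w)\<close>. The \<open>p\<close>-group \<open>A = S \<inter> C\<close> contains
\<open>x\<close> and \<open>y\<close>; acting on the right cosets of \<open>S\<^sup>g\<close> in \<open>C\<close>, whose number is prime to \<open>p\<close>, it fixes
one of them, \<open>S\<^sup>g c\<close>, i.e. \<open>c A c\<^sup>-\<^sup>1 \<subseteq> S\<^sup>g\<close>. So \<open>(gc)\<^sup>-\<^sup>1\<close> conjugates \<open>x\<close> into \<open>S\<close>, whence \<open>gc\<close>
centralizes \<open>x\<close>, and likewise \<open>y\<close>. Therefore \<open>xy = (xy)\<^sup>g\<^sup>c = w\<^sup>c = w\<close>.\<close>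

lemma (in group_action) p_group_action_fixed_point:
  fixes p :: nat
  assumes "Factorial_Ring.prime p" and "order G = p ^ k" and "finite E" and "\<not> p dvd card E"
  shows "\<exists>x\<in>E. \<forall>g\<in>carrier G. \<phi> g x = x"
proof (rule ccontr)
  assume no_fixed_point: "\<not> ?thesis"
  have "p dvd card orb" if orbit: "orb \<in> orbits G E \<phi>" for orb
  proof -
    obtain x where x: "x \<in> E" and orb: "orb = orbit G \<phi> x"
      using orbit unfolding orbits_def by blast
    have "card orb dvd p ^ k"
      using orbit_stabilizer_theorem[OF x] orb assms(2) by (metis dvd_triv_left)
    then obtain i where i: "card orb = p ^ i"
      using divides_primepow_nat[OF assms(1)] by blast
    have "card orb \<noteq> 1"
    proof
      assume "card orb = 1"
      then have "orb = {x}"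
        using orbit_refl[OF x] orb by (metis card_1_singletonE singletonD)
      then have "\<forall>g\<in>carrier G. \<phi> g x = x"
        using orb unfolding orbit_def by blast
      with x no_fixed_point show False by blast
    qed
    with i show ?thesis by (cases i) auto
  qed
  then have "p dvd (\<Sum>orb\<in>orbits G E \<phi>. card orb)"
    by (rule dvd_sum)
  also have "(\<Sum>orb\<in>orbits G E \<phi>. card orb) = card E"
    using disjoint_sum[OF assms(3), of "\<lambda>_. 1::nat"] by simp
  finally show False
    using assms(4) by contradiction
qed

lemma (in group) rcosets_r_coset_closed:
  assumes "subgroup H G" and "M \<in> rcosets H" and "g \<in> carrier G"
  shows "M #> g \<in> rcosets H"
proof -
  obtain c where c: "c \<in> carrier G" "M = H #> c"
    using assms(2) unfolding RCOSETS_def by blast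
  then have "M #> g = H #> (c \<otimes> g)"
    using assms(1,3) by (simp add: coset_mult_assoc subgroup.subset)
  then show ?thesis
    using assms(1,3) c(1) by (simp add: rcosetsI subgroup.subset)
qed

lemma (in group) rcosets_right_mult_action:
  assumes H: "subgroup H G"
  shows "group_action G (rcosets H) (\<lambda>g. \<lambda>M\<in>rcosets H. M #> inv g)"
proof -
  let ?E = "rcosets H"
  let ?\<phi> = "\<lambda>g. \<lambda>M\<in>?E. M #> inv g"
  have sub: "M \<subseteq> carrier G" if "M \<in> ?E" for M
    using that H by (simp add: subgroup.rcosets_carrier is_group)
  have bij: "?\<phi> g \<in> Bij ?E" if g: "g \<in> carrier G" for g
  proof -
    have "bij_betw (\<lambda>M. M #> inv g) ?E ?E"
      by (rule bij_betw_byWitness[where f' = "\<lambda>M. M #> g"])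
        (use g sub rcosets_r_coset_closed[OF H] in \<open>auto simp: coset_mult_assoc\<close>)
    then show ?thesis
      unfolding Bij_def by simp
  qed
  have "?\<phi> (g \<otimes> h) = ?\<phi> g \<otimes>\<^bsub>BijGroup ?E\<^esub> ?\<phi> h"
    if "g \<in> carrier G" "h \<in> carrier G" for g h
    using that bij sub rcosets_r_coset_closed[OF H]
    by (auto intro!: restrict_ext simp: BijGroup_def compose_def coset_mult_assoc inv_mult_group)
  then have "?\<phi> \<in> hom G (BijGroup ?E)"
    unfolding hom_def BijGroup_def using bij by auto
  then show ?thesis
    unfolding group_action_def group_hom_def group_hom_axioms_def
    using group_BijGroup is_group by simp
qed

lemma (in group) card_rcosets_not_dvd:
  fixes p :: nat
  assumes "subgroup H G" and "card H = p ^ n" and "\<not> p ^ Suc n dvd order G"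
  shows "\<not> p dvd card (rcosets H)"
proof
  assume "p dvd card (rcosets H)"
  then have "p ^ Suc n dvd card (rcosets H) * card H"
    using assms(2) by (simp add: mult_dvd_mono)
  with assms(3) show False
    using lagrange[OF assms(1)] by simp
qed

lemma (in group) card_subgroup_dvd:
  assumes "subgroup H G" and "subgroup K G" and "H \<subseteq> K"
  shows "card H dvd card K"
proof -
  interpret K: group "G\<lparr>carrier := K\<rparr>"
    using subgroup_imp_group[OF assms(2)] .
  show ?thesis
    using K.lagrange[OF subgroup_incl[OF assms]] by (simp add: order_def) (metis dvd_triv_right)
qed

lemma (in group) p_subgroup_conj_into_sylow:
  fixes p :: nat
  assumes p: "Factorial_Ring.prime p"
    and P: "subgroup P G" "card P = p ^ k"
    and Q: "subgroup Q G" "card Q = p ^ n" and max: "\<not> p ^ Suc n dvd order G"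
  shows "\<exists>c\<in>carrier G. \<forall>h\<in>P. c \<otimes> h \<otimes> inv c \<in> Q"
proof -
  interpret P: group_action "G\<lparr>carrier := P\<rparr>" "rcosets Q" "\<lambda>g. \<lambda>M\<in>rcosets Q. M #> inv g"
    using group_hom.induced_group_hom'[OF _ P(1)] rcosets_right_mult_action[OF Q(1)]
    unfolding group_action_def by blast
  have order_P: "order (G\<lparr>carrier := P\<rparr>) = p ^ k"
    using P(2) by (simp add: order_def)
  have "order G \<noteq> 0"
    using max by (metis dvd_0_right)
  then have "finite (rcosets Q)"
    using order_gt_0_iff_finite by (simp add: RCOSETS_def)
  then obtain M where M: "M \<in> rcosets Q" and fixed: "\<forall>h\<in>P. M #> inv h = M"
    using P.p_group_action_fixed_point[OF p order_P _ card_rcosets_not_dvd[OF Q max]] by auto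
  obtain c where c: "c \<in> carrier G" and Mc: "M = Q #> c"
    using M unfolding RCOSETS_def by blast
  have "c \<otimes> h \<otimes> inv c \<in> Q" if h: "h \<in> P" for h
  proof -
    have hc: "h \<in> carrier G"
      using h subgroup.subset[OF P(1)] by blast
    have "Q #> (c \<otimes> h) = M #> h"
      using Mc coset_mult_assoc[OF subgroup.subset[OF Q(1)] c hc] by simp
    also have "\<dots> = M"
      using fixed subgroup.m_inv_closed[OF P(1) h] hc by (metis inv_inv)
    finally have "Q #> (c \<otimes> h) = Q #> c"
      using Mc by simp
    then have "c \<otimes> h \<in> Q #> c"
      using rcos_self[OF _ Q(1), of "c \<otimes> h"] c hc by simp
    then show ?thesis
      using subgroup.rcos_module[OF Q(1) is_group c] c hc by simp
  qed
  with c show ?thesis by blast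
qed

lemma (in group) p_subgroup_conj_into_sylow_in_subgroup:
  fixes p :: nat
  assumes p: "Factorial_Ring.prime p"
    and max: "\<not> p ^ Suc n dvd order G" and C: "subgroup C G"
    and P: "subgroup P G" "P \<subseteq> C" "card P = p ^ k"
    and Q: "subgroup Q G" "Q \<subseteq> C" "card Q = p ^ n"
  shows "\<exists>c\<in>C. \<forall>h\<in>P. c \<otimes> h \<otimes> inv c \<in> Q"
proof -
  interpret C: group "G\<lparr>carrier := C\<rparr>"
    using subgroup_imp_group[OF C] .
  have "card C dvd order G"
    using lagrange[OF C] by (metis dvd_triv_right)
  with max have "\<not> p ^ Suc n dvd order (G\<lparr>carrier := C\<rparr>)"
    by (auto simp: order_def dest: dvd_trans)
  then obtain c where "c \<in> C" and "\<forall>h\<in>P. c \<otimes> h \<otimes> inv\<^bsub>G\<lparr>carrier := C\<rparr>\<^esub> c \<in> Q"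
    using C.p_subgroup_conj_into_sylow[OF p subgroup_incl[OF P(1) C P(2)] P(3)
        subgroup_incl[OF Q(1) C Q(2)] Q(3)]
    by auto
  then show ?thesis
    using m_inv_consistent[OF C] by auto
qed

definition centralizer :: "('a, 'b) monoid_scheme \<Rightarrow> 'a \<Rightarrow> 'a set" where
  "centralizer G a = {c \<in> carrier G. c \<otimes>\<^bsub>G\<^esub> a = a \<otimes>\<^bsub>G\<^esub> c}"

lemma (in group) subgroup_centralizer:
  assumes a: "a \<in> carrier G"
  shows "subgroup (centralizer G a) G"
proof (rule subgroupI)
  show "centralizer G a \<subseteq> carrier G" and "centralizer G a \<noteq> {}"
    using a unfolding centralizer_def by force+
  show "inv c \<in> centralizer G a" if "c \<in> centralizer G a" for c
  proof -
    have c: "c \<in> carrier G" and comm: "c \<otimes> a = a \<otimes> c"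
      using that unfolding centralizer_def by auto
    have "inv c \<otimes> a = inv c \<otimes> (a \<otimes> c) \<otimes> inv c"
      using a c by (simp add: m_assoc)
    also have "\<dots> = a \<otimes> inv c"
      using a c by (simp add: comm[symmetric] m_assoc[symmetric])
    finally show ?thesis
      using c unfolding centralizer_def by simp
  qed
  show "c \<otimes> d \<in> centralizer G a" if "c \<in> centralizer G a" and "d \<in> centralizer G a" for c d
  proof -
    have c: "c \<in> carrier G" "c \<otimes> a = a \<otimes> c" and d: "d \<in> carrier G" "d \<otimes> a = a \<otimes> d"
      using that unfolding centralizer_def by auto
    have "c \<otimes> d \<otimes> a = c \<otimes> a \<otimes> d"
      using a c(1) d by (simp add: m_assoc)
    also have "\<dots> = a \<otimes> c \<otimes> d"
      using c(2) by simp
    also have "\<dots> = a \<otimes> (c \<otimes> d)"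
      using a c(1) d(1) by (simp add: m_assoc)
    finally show ?thesis
      using c d unfolding centralizer_def by simp
  qed
qed

lemma (in group) conj_by_closed [simp]:
  "a \<in> carrier G \<Longrightarrow> g \<in> carrier G \<Longrightarrow> conj_by G a g \<in> carrier G"
  unfolding conj_by_def by simp

lemma (in group) conj_by_mult:
  assumes "a \<in> carrier G" and "b \<in> carrier G" and "g \<in> carrier G"
  shows "conj_by G (a \<otimes> b) g = conj_by G a g \<otimes> conj_by G b g"
proof -
  have "g \<otimes> (inv g \<otimes> z) = z" if "z \<in> carrier G" for z
    using that assms(3) by (simp add: m_assoc[symmetric])
  with assms show ?thesis
    unfolding conj_by_def by (simp add: m_assoc)
qed

lemma (in group) conj_by_inv:
  "a \<in> carrier G \<Longrightarrow> g \<in> carrier G \<Longrightarrow> conj_by G (inv a) g = inv (conj_by G a g)"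
  unfolding conj_by_def by (simp add: m_assoc inv_mult_group)

lemma (in group) conj_by_conj_by:
  "a \<in> carrier G \<Longrightarrow> g \<in> carrier G \<Longrightarrow> c \<in> carrier G \<Longrightarrow>
    conj_by G (conj_by G a g) c = conj_by G a (g \<otimes> c)"
  unfolding conj_by_def by (simp add: m_assoc inv_mult_group)

lemma (in group) conj_by_eq_self_iff:
  assumes "a \<in> carrier G" and "u \<in> carrier G"
  shows "conj_by G a u = a \<longleftrightarrow> u \<in> centralizer G a"
proof -
  have "conj_by G a u = a \<longleftrightarrow> u \<otimes> conj_by G a u = u \<otimes> a"
    using assms by simp
  also have "u \<otimes> conj_by G a u = a \<otimes> u"
    using assms unfolding conj_by_def by (simp add: m_assoc[symmetric])
  finally show ?thesis
    using assms unfolding centralizer_def by auto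
qed

lemma (in group) subgroup_conj_image:
  assumes "subgroup S G" and "g \<in> carrier G"
  shows "subgroup ((\<lambda>s. conj_by G s g) ` S) G"
proof -
  have "(\<lambda>s. conj_by G s g) \<in> hom G G"
    using assms(2) by (intro homI) (simp_all add: conj_by_mult)
  then have "group_hom G G (\<lambda>s. conj_by G s g)"
    by (simp add: group_hom_def group_hom_axioms_def is_group)
  then show ?thesis
    by (rule group_hom.subgroup_img_is_subgroup[OF _ assms(1)])
qed

lemma (in group) card_conj_image:
  assumes "S \<subseteq> carrier G" and "g \<in> carrier G"
  shows "card ((\<lambda>s. conj_by G s g) ` S) = card S"
proof (rule card_image, rule inj_onI)
  fix x y assume "x \<in> S" and "y \<in> S" and eq: "conj_by G x g = conj_by G y g"
  then have "x \<in> carrier G" and "y \<in> carrier G"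
    using assms(1) by auto
  with eq assms(2) show "x = y"
    by (simp add: conj_by_def m_assoc)
qed

lemma (in group) conj_image_subset_centralizer:
  assumes S: "subgroup S G" and z: "z \<in> center_of G S" and g: "g \<in> carrier G"
  shows "(\<lambda>s. conj_by G s g) ` S \<subseteq> centralizer G (conj_by G z g)"
proof
  fix q assume "q \<in> (\<lambda>s. conj_by G s g) ` S"
  then obtain s where s: "s \<in> S" and q: "q = conj_by G s g"
    by blast
  have sc: "s \<in> carrier G" and zc: "z \<in> carrier G"
    using s z subgroup.mem_carrier[OF S] unfolding center_of_def by auto
  have "q \<otimes> conj_by G z g = conj_by G (s \<otimes> z) g"
    using conj_by_mult sc zc g unfolding q by simp
  also have "\<dots> = conj_by G (z \<otimes> s) g"
    using z s unfolding center_of_def by simp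
  also have "\<dots> = conj_by G z g \<otimes> q"
    using conj_by_mult sc zc g unfolding q by simp
  finally show "q \<in> centralizer G (conj_by G z g)"
    using sc g unfolding q centralizer_def by simp
qed

lemma (in group) weakly_closed_elems_subset_center:
  assumes S: "subgroup S G"
  shows "weakly_closed_elems G S \<subseteq> center_of G S"
proof
  fix x assume x: "x \<in> weakly_closed_elems G S"
  then have xS: "x \<in> S"
    unfolding weakly_closed_elems_def by simp
  have "x \<otimes> y = y \<otimes> x" if y: "y \<in> S" for y
  proof -
    have "conj_by G x y \<in> S"
      unfolding conj_by_def using S xS y by (simp add: subgroup.m_closed subgroup.m_inv_closed)
    then have "conj_by G x y = x"
      using x y subgroup.mem_carrier[OF S] unfolding weakly_closed_elems_def by blast
    then show ?thesis
      using conj_by_eq_self_iff xS y subgroup.mem_carrier[OF S] unfolding centralizer_def by auto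
  qed
  with xS show "x \<in> center_of G S"
    unfolding center_of_def by simp
qed

lemma (in group) center_of_m_closed:
  assumes S: "subgroup S G" and x: "x \<in> center_of G S" and y: "y \<in> center_of G S"
  shows "x \<otimes> y \<in> center_of G S"
proof -
  have "x \<otimes> y \<in> centralizer G s" if s: "s \<in> S" for s
  proof -
    have "x \<in> centralizer G s" and "y \<in> centralizer G s"
      using x y s subgroup.mem_carrier[OF S] unfolding center_of_def centralizer_def by blast+
    then show ?thesis
      using subgroup.m_closed[OF subgroup_centralizer] s subgroup.mem_carrier[OF S] by blast
  qed
  moreover have "x \<otimes> y \<in> S"
    using x y subgroup.m_closed[OF S] unfolding center_of_def by blast
  ultimately show ?thesis
    unfolding center_of_def centralizer_def by blast
qed

lemma (in group) weakly_closed_elems_one_closed: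
  "subgroup S G \<Longrightarrow> \<one> \<in> weakly_closed_elems G S"
  unfolding weakly_closed_elems_def conj_by_def by (simp add: subgroup.one_closed)

lemma (in group) weakly_closed_elems_m_inv_closed:
  assumes S: "subgroup S G" and x: "x \<in> weakly_closed_elems G S"
  shows "inv x \<in> weakly_closed_elems G S"
proof -
  have xS: "x \<in> S" and xc: "x \<in> carrier G"
    using x subgroup.mem_carrier[OF S] unfolding weakly_closed_elems_def by auto
  have "conj_by G (inv x) g = inv x" if g: "g \<in> carrier G" and "conj_by G (inv x) g \<in> S" for g
  proof -
    have "conj_by G x g \<in> S"
      using subgroup.m_inv_closed[OF S \<open>conj_by G (inv x) g \<in> S\<close>] conj_by_inv[OF xc g] xc g
      by simp
    then have "conj_by G x g = x"
      using x g unfolding weakly_closed_elems_def by blast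
    then show ?thesis
      using conj_by_inv[OF xc g] by simp
  qed
  with xS show ?thesis
    using subgroup.m_inv_closed[OF S] unfolding weakly_closed_elems_def by auto
qed

lemma (in group) weakly_closed_elem_centralized_by_conjugator:
  assumes S: "subgroup S G" and h: "h \<in> weakly_closed_elems G S"
    and g: "g \<in> carrier G" and c: "c \<in> carrier G"
    and into: "c \<otimes> h \<otimes> inv c \<in> (\<lambda>s. conj_by G s g) ` S"
  shows "g \<otimes> c \<in> centralizer G h"
proof -
  obtain s where s: "s \<in> S" and eq: "c \<otimes> h \<otimes> inv c = conj_by G s g"
    using into by blast
  have hc: "h \<in> carrier G" and sc: "s \<in> carrier G"
    using h s subgroup.mem_carrier[OF S] unfolding weakly_closed_elems_def by auto
  have "conj_by G h (inv (g \<otimes> c)) = g \<otimes> (c \<otimes> h \<otimes> inv c) \<otimes> inv g"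
    using g c hc unfolding conj_by_def by (simp add: inv_mult_group m_assoc)
  also have "\<dots> = s"
    using g sc unfolding eq conj_by_def by (simp add: m_assoc[symmetric]) (simp add: m_assoc)
  finally have "conj_by G h (inv (g \<otimes> c)) = h"
    using h s g c unfolding weakly_closed_elems_def by auto
  then have "inv (g \<otimes> c) \<in> centralizer G h"
    using conj_by_eq_self_iff hc g c by simp
  then show ?thesis
    using subgroup.m_inv_closed[OF subgroup_centralizer[OF hc]] g c by fastforce
qed

lemma (in group) sylow_subgroupE:
  fixes p :: nat
  assumes "Factorial_Ring.prime p" and "finite (carrier G)" and "sylow_subgroup G p S"
  obtains n where "subgroup S G" and "card S = p ^ n" and "\<not> p ^ Suc n dvd order G"
proof
  show "subgroup S G" and "card S = p ^ multiplicity p (order G)"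
    using assms(3) unfolding sylow_subgroup_def by auto
  have "order G \<noteq> 0"
    using assms(2) order_gt_0_iff_finite by simp
  moreover have "\<not> is_unit p"
    using prime_gt_1_nat[OF assms(1)] by simp
  ultimately show "\<not> p ^ Suc (multiplicity p (order G)) dvd order G"
    using power_dvd_iff_le_multiplicity[of "order G" p "Suc (multiplicity p (order G))"] by simp
qed

lemma (in group) weakly_closed_elems_m_closed:
  fixes p :: nat
  assumes p: "Factorial_Ring.prime p"
    and S: "subgroup S G" and card_S: "card S = p ^ n" and max: "\<not> p ^ Suc n dvd order G"
    and x: "x \<in> weakly_closed_elems G S" and y: "y \<in> weakly_closed_elems G S"
  shows "x \<otimes> y \<in> weakly_closed_elems G S"
proof -
  have x_center: "x \<in> center_of G S" and y_center: "y \<in> center_of G S"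
    using x y weakly_closed_elems_subset_center[OF S] by auto
  have xy_center: "x \<otimes> y \<in> center_of G S"
    by (rule center_of_m_closed[OF S x_center y_center])
  have xc: "x \<in> carrier G" and yc: "y \<in> carrier G"
    using x_center y_center subgroup.mem_carrier[OF S] unfolding center_of_def by auto
  have "conj_by G (x \<otimes> y) g = x \<otimes> y"
    if g: "g \<in> carrier G" and wS: "conj_by G (x \<otimes> y) g \<in> S" for g
  proof -
    define w where "w = conj_by G (x \<otimes> y) g"
    define C where "C = centralizer G w"
    define Q where "Q = (\<lambda>s. conj_by G s g) ` S"
    have wc: "w \<in> carrier G"
      using xc yc g unfolding w_def by simp
    have C: "subgroup C G"
      unfolding C_def using subgroup_centralizer[OF wc] .
    have Q: "subgroup Q G" "Q \<subseteq> C" "card Q = p ^ n"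
      unfolding Q_def C_def w_def
      using subgroup_conj_image[OF S g] conj_image_subset_centralizer[OF S xy_center g]
        card_conj_image[OF subgroup.subset[OF S] g] card_S
      by simp_all
    have A: "subgroup (S \<inter> C) G"
      by (rule subgroups_Inter_pair[OF S C])
    have "card (S \<inter> C) dvd p ^ n"
      using card_subgroup_dvd[OF A S] card_S by simp
    then obtain k where card_A: "card (S \<inter> C) = p ^ k"
      unfolding divides_primepow_nat[OF p] by blast
    obtain c where cC: "c \<in> C" and into: "\<forall>h\<in>S \<inter> C. c \<otimes> h \<otimes> inv c \<in> Q"
      using p_subgroup_conj_into_sylow_in_subgroup[OF p max C A Int_lower2 card_A Q] by blast
    have cc: "c \<in> carrier G"
      using cC subgroup.mem_carrier[OF C] by blast
    have "x \<in> S \<inter> C" and "y \<in> S \<inter> C"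
      using x_center y_center xc yc wS[folded w_def] unfolding center_of_def C_def centralizer_def
      by auto
    then have "g \<otimes> c \<in> centralizer G x" and "g \<otimes> c \<in> centralizer G y"
      using weakly_closed_elem_centralized_by_conjugator[OF S _ g cc] x y into
      unfolding Q_def by auto
    then have "conj_by G x (g \<otimes> c) = x" and "conj_by G y (g \<otimes> c) = y"
      using xc yc g cc by (simp_all add: conj_by_eq_self_iff)
    then have "x \<otimes> y = conj_by G (x \<otimes> y) (g \<otimes> c)"
      using conj_by_mult[OF xc yc] g cc by simp
    also have "\<dots> = conj_by G w c"
      using conj_by_conj_by xc yc g cc unfolding w_def by simp
    also have "\<dots> = w"
      using conj_by_eq_self_iff wc cc cC unfolding C_def by simp
    finally show ?thesis
      unfolding w_def by simp
  qed
  with xy_center show ?thesis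
    unfolding weakly_closed_elems_def center_of_def by auto
qed

theorem mainTheorem3:
  fixes G :: "('a, 'b) monoid_scheme" and p :: nat and S :: "'a set"
  assumes "group G" and "finite (carrier G)" and "Factorial_Ring.prime p"
    and "sylow_subgroup G p S"
  shows "subgroup (weakly_closed_elems G S) G
         \<and> weakly_closed_elems G S \<subseteq> center_of G S"
proof -
  interpret group G by (rule assms(1))
  obtain n where S: "subgroup S G" and card_S: "card S = p ^ n"
    and max: "\<not> p ^ Suc n dvd order G"
    using sylow_subgroupE[OF assms(3,2,4)] .
  have "subgroup (weakly_closed_elems G S) G"
  proof (rule subgroupI)
    show "weakly_closed_elems G S \<subseteq> carrier G"
      using subgroup.subset[OF S] unfolding weakly_closed_elems_def by auto
    show "weakly_closed_elems G S \<noteq> {}"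
      using weakly_closed_elems_one_closed[OF S] by blast
    show "inv\<^bsub>G\<^esub> x \<in> weakly_closed_elems G S" if "x \<in> weakly_closed_elems G S" for x
      using weakly_closed_elems_m_inv_closed[OF S that] .
    show "x \<otimes>\<^bsub>G\<^esub> y \<in> weakly_closed_elems G S"
      if "x \<in> weakly_closed_elems G S" and "y \<in> weakly_closed_elems G S" for x y
      using weakly_closed_elems_m_closed[OF assms(3) S card_S max that] .
  qed
  with weakly_closed_elems_subset_center[OF S] show ?thesis
    by simp
qed

end
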